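(* If the communication graph of a system is a tree, then (for any assignment of directions giving adjacent circles opposite directions) there is a single ring.
   Context: A system consists of pairwise disjoint unit circles $C_1,\dots,C_N$ in the plane and a communication range $r>0$; its communication graph $G$ has the circles as vertices, $C_i,C_j$ adjacent iff the distance between their centres is at most $2+r$. For an edge $(i,j)$, the link position $\phi_{ij}$ is the point of $C_i$ closest to $C_j$. A direction assignment gives each circle $C$ a direction $g(C)\in\{1,-1\}$ (counterclockwise/clockwise) with $g(C_i)=-g(C_j)$ for adjacent circles. Rings. Trace a point moving along a circle $C_i$ in direction $g(C_i)$; whenever it reaches a link position $\phi_{ij}$ of its current circle, it passes to $C_j$ at $\phi_{ji}$ and continues along $C_j$ in direction $g(C_j)$ (the motion of a robot that never meets anyone). This motion is periodic and the closed curve traced is a ring; every arc between consecutive link positions of a circle belongs to exactly one ring, so the circles decompose into rings overlapping only at link positions. *)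

theory Defs
  imports "HOL-Analysis.Analysis"
begin

text \<open>Circles C_0,...,C_{N-1} are unit circles in the plane (complex numbers) with
  centres c i.  Points of the plane are complex numbers.\<close>

definition comm_adj :: "nat \<Rightarrow> (nat \<Rightarrow> complex) \<Rightarrow> real \<Rightarrow> nat \<Rightarrow> nat \<Rightarrow> bool" where
  "comm_adj N c r i j \<longleftrightarrow> i < N \<and> j < N \<and> i \<noteq> j \<and> cmod (c i - c j) \<le> 2 + r"

definition link_pos :: "(nat \<Rightarrow> complex) \<Rightarrow> nat \<Rightarrow> nat \<Rightarrow> complex" where
  "link_pos c i j = c i + (c j - c i) / complex_of_real (cmod (c j - c i))"

definition links :: "nat \<Rightarrow> (nat \<Rightarrow> complex) \<Rightarrow> real \<Rightarrow> nat \<Rightarrow> complex set" where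
  "links N c r i = {link_pos c i j | j. comm_adj N c r i j}"

definition rot :: "(nat \<Rightarrow> complex) \<Rightarrow> (nat \<Rightarrow> real) \<Rightarrow> nat \<Rightarrow> complex \<Rightarrow> real \<Rightarrow> complex" where
  "rot c g i p u = c i + (p - c i) * cis (g i * u)"

definition graph_connected :: "nat \<Rightarrow> (nat \<Rightarrow> nat \<Rightarrow> bool) \<Rightarrow> bool" where
  "graph_connected N E \<longleftrightarrow> (\<forall>i<N. \<forall>j<N. E\<^sup>*\<^sup>* i j)"

definition graph_has_cycle :: "nat \<Rightarrow> (nat \<Rightarrow> nat \<Rightarrow> bool) \<Rightarrow> bool" where
  "graph_has_cycle N E \<longleftrightarrow> (\<exists>vs. 3 \<le> length vs \<and> distinct vs \<and> set vs \<subseteq> {..<N} \<and>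
      (\<forall>k. Suc k < length vs \<longrightarrow> E (vs ! k) (vs ! Suc k)) \<and> E (last vs) (hd vs))"

definition graph_tree :: "nat \<Rightarrow> (nat \<Rightarrow> nat \<Rightarrow> bool) \<Rightarrow> bool" where
  "graph_tree N E \<longleftrightarrow> 1 \<le> N \<and> graph_connected N E \<and> \<not> graph_has_cycle N E"

definition direction_assignment :: "nat \<Rightarrow> (nat \<Rightarrow> complex) \<Rightarrow> real \<Rightarrow> (nat \<Rightarrow> real) \<Rightarrow> bool" where
  "direction_assignment N c r g \<longleftrightarrow> (\<forall>i<N. g i \<in> {1, -1}) \<and>
      (\<forall>i j. comm_adj N c r i j \<longrightarrow> g i = - g j)"

text \<open>States of the moving point that starts at p0 on C_i0: the point is on circle i at p
  and about to move along C_i in direction g i.  After moving (a positive angle) to the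
  first link position phi_ij reached, it passes to C_j at phi_ji.\<close>
inductive ring_state :: "nat \<Rightarrow> (nat \<Rightarrow> complex) \<Rightarrow> real \<Rightarrow> (nat \<Rightarrow> real) \<Rightarrow> nat \<Rightarrow> complex
    \<Rightarrow> nat \<Rightarrow> complex \<Rightarrow> bool"
  for N c r g i0 p0 where
  start: "ring_state N c r g i0 p0 i0 p0"
| pass: "ring_state N c r g i0 p0 i p \<Longrightarrow> 0 < s \<Longrightarrow>
      (\<forall>u\<in>{0<..<s}. rot c g i p u \<notin> links N c r i) \<Longrightarrow>
      comm_adj N c r i j \<Longrightarrow> rot c g i p s = link_pos c i j \<Longrightarrow>
      ring_state N c r g i0 p0 j (link_pos c j i)"

definition ring_trace :: "nat \<Rightarrow> (nat \<Rightarrow> complex) \<Rightarrow> real \<Rightarrow> (nat \<Rightarrow> real) \<Rightarrow> nat \<Rightarrow> complex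
    \<Rightarrow> complex set" where
  "ring_trace N c r g i0 p0 = {rot c g i p s | i p s. ring_state N c r g i0 p0 i p \<and> 0 \<le> s \<and>
      (\<forall>u\<in>{0<..<s}. rot c g i p u \<notin> links N c r i)}"

end

theory Submission
  imports Defs "HOL-Library.Real_Mod"
begin

text \<open>Call a link from \<open>C\<^sub>j\<close> to \<open>C\<^sub>k\<close> returning if, whenever the motion passes from
  \<open>C\<^sub>j\<close> to \<open>C\<^sub>k\<close>, it also passes from \<open>C\<^sub>k\<close> back to \<open>C\<^sub>j\<close>. After entering \<open>C\<^sub>k\<close> at
  \<open>\<phi>\<^sub>k\<^sub>j\<close> the motion sweeps around \<open>C\<^sub>k\<close> and leaves through each link position it meets,
  as long as the links met before are returning; if it never comes back through
  \<open>\<phi>\<^sub>k\<^sub>j\<close>, the first non-returning link of \<open>C\<^sub>k\<close> leads to some \<open>C\<^sub>m\<close> with \<open>m \<noteq> j\<close>.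
  A non-returning link thus starts an infinite non-backtracking walk in a finite
  graph, i.e.\ a cycle. In a tree every link is returning, so the motion sweeps every
  circle it enters completely and, by connectivity, enters every circle.\<close>

lemma cis_period_angle_unique:
  assumes "norm w = 1"
  shows "\<exists>!t. 0 < t \<and> t \<le> 2 * pi \<and> cis t = w"
proof (rule ex1I)
  define t where "t = 2 * pi - (- Arg w) rmod (2 * pi)"
  have "cis t = cis (2 * pi) / cis ((- Arg w) rmod (2 * pi))"
    unfolding t_def by (rule cis_divide[symmetric])
  also have "\<dots> = cis (Arg w)"
    by (simp add: divide_inverse)
  also have "\<dots> = w"
    using assms cis_Arg[of w] by (simp add: sgn_div_norm) (metis norm_zero zero_neq_one)
  finally have "cis t = w" .
  moreover have "0 < t" "t \<le> 2 * pi"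
    using rmod_less[of "2 * pi" "- Arg w"] rmod_nonneg[of "2 * pi" "- Arg w"] by (auto simp: t_def)
  ultimately show t: "0 < t \<and> t \<le> 2 * pi \<and> cis t = w"
    by blast
  fix s assume s: "0 < s \<and> s \<le> 2 * pi \<and> cis s = w"
  have "[s = t] (rmod (2 * pi))"
    using s t cis_eq_iff[of s t] by simp
  then show "s = t"
    by (rule rcong_imp_eq) (use s t in auto)
qed

lemma rot_0 [simp]: "rot c g i p 0 = p"
  by (simp add: rot_def)

lemma rot_rot: "rot c g i (rot c g i p a) b = rot c g i p (a + b)"
  by (simp add: rot_def distrib_left mult.assoc flip: cis_mult)

lemma norm_rot_minus_centre: "cmod (rot c g i p u - c i) = cmod (p - c i)"
  by (simp add: rot_def norm_mult)

lemma rot_angle_unique: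
  assumes "g i \<in> {1, -1}" "cmod (p - c i) = 1" "cmod (q - c i) = 1"
  shows "\<exists>!t. 0 < t \<and> t \<le> 2 * pi \<and> rot c g i p t = q"
proof -
  define w where "w = (q - c i) / (p - c i)"
  have p: "p - c i \<noteq> 0"
    using assms(2) by auto
  have "rot c g i p t = q \<longleftrightarrow> cis (g i * t) = w" for t
    using p by (auto simp: rot_def w_def field_simps)
  also have "\<dots> t \<longleftrightarrow> cis t = (if g i = 1 then w else inverse w)" for t
    using assms(1) by (auto simp flip: cis_inverse)
  moreover have "norm (if g i = 1 then w else inverse w) = 1"
    using assms by (simp add: w_def norm_divide)
  ultimately show ?thesis
    using cis_period_angle_unique by simp
qed

lemma first_repetition:
  fixes w :: "nat \<Rightarrow> 'a"
  assumes "finite (range w)"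
  obtains a b where "a < b" "w a = w b" "inj_on w {..<b}"
proof -
  have "\<not> inj w"
    using assms finite_imageD infinite_UNIV_nat by blast
  then obtain x y where "x \<noteq> y" "w x = w y"
    unfolding inj_def by blast
  then have ex: "\<exists>b. \<exists>a<b. w a = w b"
    by (cases x y rule: linorder_cases) (auto intro: sym)
  define b where "b = (LEAST b. \<exists>a<b. w a = w b)"
  obtain a where "a < b" "w a = w b"
    using LeastI_ex[OF ex] by (auto simp: b_def)
  moreover have "inj_on w {..<b}"
  proof (rule inj_onI, rule ccontr)
    fix x y assume "x \<in> {..<b}" "y \<in> {..<b}" "w x = w y" "x \<noteq> y"
    then have "\<exists>a<max x y. w a = w (max x y)"
      by (cases x y rule: linorder_cases) auto
    then have "b \<le> max x y"
      unfolding b_def by (rule Least_le)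
    with \<open>x \<in> {..<b}\<close> \<open>y \<in> {..<b}\<close> show False
      by auto
  qed
  ultimately show thesis
    using that by blast
qed

lemma nonbacktracking_walk_has_cycle:
  assumes edge: "\<And>n. E (w n) (w (Suc n))"
    and no_loop: "\<And>n. w (Suc n) \<noteq> w n"
    and no_backtrack: "\<And>n. w (Suc (Suc n)) \<noteq> w n"
    and bounded: "\<And>n. w n < N"
  shows "graph_has_cycle N E"
proof -
  have "finite (range w)"
    using bounded by (meson finite_lessThan finite_subset image_subsetI lessThan_iff)
  then obtain a b where ab: "a < b" "w a = w b" and inj: "inj_on w {..<b}"
    by (rule first_repetition)
  define vs where "vs = map w [a..<b]"
  have "b \<noteq> Suc a" "b \<noteq> Suc (Suc a)"
    using no_loop[of a] no_backtrack[of a] ab by auto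
  then have "3 \<le> length vs"
    using ab by (simp add: vs_def)
  moreover have "distinct vs"
    using inj by (auto simp: vs_def distinct_map intro: inj_on_subset)
  moreover have "set vs \<subseteq> {..<N}"
    using bounded by (auto simp: vs_def)
  moreover have "E (vs ! k) (vs ! Suc k)" if "Suc k < length vs" for k
    using edge[of "a + k"] that by (simp add: vs_def)
  moreover have "E (last vs) (hd vs)"
    using edge[of "b - 1"] ab by (simp add: vs_def last_map hd_map)
  ultimately show ?thesis
    unfolding graph_has_cycle_def by blast
qed

lemma nonbacktracking_walk_exists:
  assumes step: "\<And>a b. P a b \<Longrightarrow> \<exists>d. d \<noteq> a \<and> P b d" and start: "P u v"
  obtains w where "\<And>n. P (w n) (w (Suc n))" "\<And>n. w (Suc (Suc n)) \<noteq> w n"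
proof -
  have "\<exists>x. P (fst x) (snd x)"
    using start by (intro exI[of _ "(u, v)"]) simp
  moreover have "\<exists>y. P (fst y) (snd y) \<and> fst y = snd x \<and> snd y \<noteq> fst x" if "P (fst x) (snd x)" for x
    using step[OF that] by auto
  ultimately obtain f where f: "\<forall>n. P (fst (f n)) (snd (f n)) \<and>
      fst (f (Suc n)) = snd (f n) \<and> snd (f (Suc n)) \<noteq> fst (f n)"
    using dependent_nat_choice[of "\<lambda>_ x. P (fst x) (snd x)" "\<lambda>_ x y. fst y = snd x \<and> snd y \<noteq> fst x"]
    by blast
  show thesis
    by (rule that[of "fst \<circ> f"]) (simp_all add: f)
qed

locale ring_system =
  fixes N :: nat and c :: "nat \<Rightarrow> complex" and r :: real and g :: "nat \<Rightarrow> real"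
    and i0 :: nat and p0 :: complex
  assumes distinct_centres: "\<And>i j. i < N \<Longrightarrow> j < N \<Longrightarrow> i \<noteq> j \<Longrightarrow> c i \<noteq> c j"
    and directions: "\<And>i. i < N \<Longrightarrow> g i \<in> {1, -1}"
    and start_circle: "i0 < N" and start_point: "cmod (p0 - c i0) = 1"
begin

abbreviation "adj \<equiv> comm_adj N c r"
abbreviation "reached \<equiv> ring_state N c r g i0 p0"
abbreviation "ring \<equiv> ring_trace N c r g i0 p0"

definition crosses :: "nat \<Rightarrow> nat \<Rightarrow> bool" where
  "crosses j k \<longleftrightarrow> reached k (link_pos c k j)"

definition returning :: "nat \<Rightarrow> nat \<Rightarrow> bool" where
  "returning j k \<longleftrightarrow> (crosses j k \<longrightarrow> crosses k j)"

lemma adj_sym: "adj i j \<Longrightarrow> adj j i"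
  by (auto simp: comm_adj_def norm_minus_commute)

lemma adj_bounds: "adj i j \<Longrightarrow> i < N \<and> j < N \<and> i \<noteq> j"
  by (auto simp: comm_adj_def)

lemma link_pos_on_circle: "adj i j \<Longrightarrow> cmod (link_pos c i j - c i) = 1"
  using distinct_centres[of j i] adj_bounds[of i j] by (simp add: link_pos_def norm_divide)

lemma reached_on_circle: "reached i p \<Longrightarrow> i < N \<and> cmod (p - c i) = 1"
  by (induction rule: ring_state.induct)
    (use start_circle start_point link_pos_on_circle adj_sym adj_bounds in auto)

lemma finite_links: "finite (links N c r j)"
proof -
  have "links N c r j = link_pos c j ` {k. adj j k}"
    by (auto simp: links_def)
  moreover have "{k. adj j k} \<subseteq> {..<N}"
    using adj_bounds by auto
  ultimately show ?thesis
    by (metis finite_imageI finite_lessThan finite_subset)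
qed

lemma ring_subset_circles: "ring \<subseteq> (\<Union>k<N. sphere (c k) 1)"
proof
  fix x assume "x \<in> ring"
  then obtain i q s where "x = rot c g i q s" "reached i q"
    unfolding ring_trace_def by blast
  then have "i < N" "x \<in> sphere (c i) 1"
    using reached_on_circle[of i q] norm_rot_minus_centre[of c g i q s]
    by (auto simp: dist_norm norm_minus_commute)
  then show "x \<in> (\<Union>k<N. sphere (c k) 1)"
    by blast
qed

end

locale circle_sweep = ring_system +
  fixes j :: nat and p :: complex
  assumes reached_start: "reached j p"
begin

lemma j_bounded: "j < N" and p_on_circle: "cmod (p - c j) = 1"
  using reached_on_circle[OF reached_start] by auto

text \<open>Angles are taken in \<open>(0, 2\<pi>]\<close>: the start point \<open>p\<close> is met again only after a full
  turn, which is how the motion leaves through a link located at \<open>p\<close>.\<close>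
definition sweep_angle :: "complex \<Rightarrow> real" where
  "sweep_angle q = (THE t. 0 < t \<and> t \<le> 2 * pi \<and> rot c g j p t = q)"

definition stops :: "real set" where
  "stops = insert 0 (sweep_angle ` links N c r j)"

lemma sweep_angle:
  assumes "cmod (q - c j) = 1"
  shows "0 < sweep_angle q" "sweep_angle q \<le> 2 * pi" "rot c g j p (sweep_angle q) = q"
  using theI'[OF rot_angle_unique[where c = c and g = g and i = j and p = p,
        OF directions[OF j_bounded] p_on_circle assms]]
  by (auto simp: sweep_angle_def)

lemma sweep_angle_eqI:
  assumes "0 < t" "t \<le> 2 * pi" "rot c g j p t = q"
  shows "sweep_angle q = t"
  using rot_angle_unique[where c = c and g = g and i = j and p = p and q = q,
      OF directions[OF j_bounded] p_on_circle] assms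
    sweep_angle[of q] norm_rot_minus_centre[of c g j p t] p_on_circle by metis

lemma sweep_angle_link:
  "adj j k \<Longrightarrow> 0 < sweep_angle (link_pos c j k) \<and> sweep_angle (link_pos c j k) \<le> 2 * pi \<and>
    rot c g j p (sweep_angle (link_pos c j k)) = link_pos c j k"
  using sweep_angle[OF link_pos_on_circle] by blast

lemma finite_stops: "finite stops"
  using finite_links by (simp add: stops_def)

lemma last_stop_before:
  assumes "0 < t"
  obtains t0 where "t0 \<in> stops" "t0 < t" "\<And>x. x \<in> stops \<Longrightarrow> \<not> (t0 < x \<and> x < t)"
proof -
  let ?S = "{x \<in> stops. x < t}"
  have "finite ?S" "0 \<in> ?S"
    using finite_stops assms by (auto simp: stops_def)
  then show thesis
    using that[of "Max ?S"] Max_in[of ?S] Max_ge[of ?S] by fastforce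
qed

lemma stop_nonneg: "x \<in> stops \<Longrightarrow> 0 \<le> x"
  using sweep_angle by (fastforce simp: stops_def links_def dest: link_pos_on_circle)

lemma arc_avoids_links:
  assumes "t0 \<in> stops" "t \<le> 2 * pi" "\<And>x. x \<in> stops \<Longrightarrow> \<not> (t0 < x \<and> x < t)"
  shows "\<forall>u\<in>{0<..<t - t0}. rot c g j (rot c g j p t0) u \<notin> links N c r j"
proof (intro ballI notI)
  fix u assume u: "u \<in> {0<..<t - t0}" and "rot c g j (rot c g j p t0) u \<in> links N c r j"
  then obtain k where k: "adj j k" "rot c g j p (t0 + u) = link_pos c j k"
    by (auto simp: links_def rot_rot)
  have "sweep_angle (link_pos c j k) = t0 + u"
    by (rule sweep_angle_eqI) (use u stop_nonneg[OF assms(1)] assms(2) k(2) in auto)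
  moreover have "sweep_angle (link_pos c j k) \<in> stops"
    using k(1) by (auto simp: stops_def links_def)
  ultimately show False
    using assms(3)[of "t0 + u"] u by auto
qed

lemma reached_at_stop:
  assumes "t0 \<in> stops"
    and "\<And>k. adj j k \<Longrightarrow> t0 = sweep_angle (link_pos c j k) \<Longrightarrow> crosses k j"
  shows "reached j (rot c g j p t0)"
proof (cases "t0 = 0")
  case True
  then show ?thesis
    using reached_start by simp
next
  case False
  then obtain k where k: "adj j k" "t0 = sweep_angle (link_pos c j k)"
    using assms(1) by (auto simp: stops_def links_def)
  then have "crosses k j"
    using assms(2) by blast
  then show ?thesis
    using sweep_angle_link[OF k(1)] k(2) by (simp add: crosses_def)
qed

lemma continue_to_next_stop:
  assumes "reached j (rot c g j p t0)" "t0 \<in> stops" "t0 < t" "t \<le> 2 * pi"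
    and "\<And>x. x \<in> stops \<Longrightarrow> \<not> (t0 < x \<and> x < t)"
  shows "rot c g j p t \<in> ring"
    and "adj j k \<Longrightarrow> rot c g j p t = link_pos c j k \<Longrightarrow> crosses j k"
proof -
  have free: "\<forall>u\<in>{0<..<t - t0}. rot c g j (rot c g j p t0) u \<notin> links N c r j"
    using arc_avoids_links assms by blast
  have t: "rot c g j (rot c g j p t0) (t - t0) = rot c g j p t"
    by (simp add: rot_rot)
  show "rot c g j p t \<in> ring"
    unfolding ring_trace_def mem_Collect_eq
    by (intro exI[of _ j] exI[of _ "rot c g j p t0"] exI[of _ "t - t0"])
      (use assms(1,3) free t in auto)
  show "crosses j k" if "adj j k" "rot c g j p t = link_pos c j k"
    unfolding crosses_def
    by (rule ring_state.pass[OF assms(1) _ free that(1)]) (use assms(3) t that(2) in auto)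
qed

lemma crosses_link:
  assumes "adj j k"
    and "\<And>k'. adj j k' \<Longrightarrow> sweep_angle (link_pos c j k') < sweep_angle (link_pos c j k) \<Longrightarrow>
          returning j k'"
  shows "crosses j k"
  using assms
proof (induction "card {x \<in> stops. x < sweep_angle (link_pos c j k)}" arbitrary: k rule: less_induct)
  case less
  let ?s = "sweep_angle (link_pos c j k)"
  obtain t0 where t0: "t0 \<in> stops" "t0 < ?s" "\<And>x. x \<in> stops \<Longrightarrow> \<not> (t0 < x \<and> x < ?s)"
    using last_stop_before sweep_angle_link[OF less.prems(1)] by blast
  have "crosses k' j" if k': "adj j k'" "t0 = sweep_angle (link_pos c j k')" for k'
  proof -
    have "{x \<in> stops. x < t0} \<subset> {x \<in> stops. x < ?s}"
      using t0 by auto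
    then have "card {x \<in> stops. x < t0} < card {x \<in> stops. x < ?s}"
      using finite_stops by (simp add: psubset_card_mono)
    then have "crosses j k'"
      using less.hyps[of k'] k' less.prems(2) t0(2) by fastforce
    then show ?thesis
      using less.prems(2)[OF k'(1)] k'(2) t0(2) by (simp add: returning_def)
  qed
  then have "reached j (rot c g j p t0)"
    using reached_at_stop t0(1) by blast
  then show ?case
    using continue_to_next_stop(2)[OF _ t0(1,2) _ t0(3) less.prems(1)]
      sweep_angle_link[OF less.prems(1)] by blast
qed

lemma sweep_covers_circle:
  assumes "\<And>k. adj j k \<Longrightarrow> returning j k"
  shows "sphere (c j) 1 \<subseteq> ring"
proof
  fix q assume "q \<in> sphere (c j) 1"
  then have "cmod (q - c j) = 1"
    by (simp add: dist_norm norm_minus_commute)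
  note t = sweep_angle[OF this]
  obtain t0 where t0: "t0 \<in> stops" "t0 < sweep_angle q"
    "\<And>x. x \<in> stops \<Longrightarrow> \<not> (t0 < x \<and> x < sweep_angle q)"
    using last_stop_before t(1) by blast
  have "reached j (rot c g j p t0)"
    using reached_at_stop[OF t0(1)] crosses_link assms by (meson returning_def)
  then show "q \<in> ring"
    using continue_to_next_stop(1)[OF _ t0(1,2) t(2) t0(3)] t(3) by simp
qed

end

context ring_system
begin

lemma non_returning_link_propagates:
  assumes "adj j k" "\<not> returning j k"
  shows "\<exists>k'. k' \<noteq> j \<and> adj k k' \<and> \<not> returning k k'"
proof -
  have "crosses j k" "\<not> crosses k j"
    using assms(2) by (auto simp: returning_def)
  interpret sweep: circle_sweep N c r g i0 p0 k "link_pos c k j"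
    by unfold_locales (use \<open>crosses j k\<close> in \<open>simp add: crosses_def\<close>)
  let ?F = "{k'. adj k k' \<and> \<not> returning k k'}"
  have "?F \<noteq> {}"
    using sweep.crosses_link[OF adj_sym[OF assms(1)]] \<open>\<not> crosses k j\<close> by blast
  moreover have "finite ?F"
    using adj_bounds by (auto intro: finite_subset[of _ "{..<N}"])
  ultimately obtain k' where "is_arg_min (\<lambda>k'. sweep.sweep_angle (link_pos c k k')) (\<lambda>k'. k' \<in> ?F) k'"
    using ex_is_arg_min_if_finite by blast
  then have k': "k' \<in> ?F"
    and first: "\<And>k''. adj k k'' \<Longrightarrow> sweep.sweep_angle (link_pos c k k'') < sweep.sweep_angle (link_pos c k k')
      \<Longrightarrow> returning k k''"
    by (auto simp: is_arg_min_def)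
  have "crosses k k'"
    using sweep.crosses_link[of k'] k' first by blast
  then have "k' \<noteq> j"
    using k' \<open>crosses j k\<close> by (auto simp: returning_def)
  with k' show ?thesis
    by blast
qed

lemma returning_if_acyclic:
  assumes acyclic: "\<not> graph_has_cycle N adj" and "adj j k"
  shows "returning j k"
proof (rule ccontr)
  assume "\<not> returning j k"
  with \<open>adj j k\<close> obtain w where walk: "\<And>n. adj (w n) (w (Suc n)) \<and> \<not> returning (w n) (w (Suc n))"
    "\<And>n. w (Suc (Suc n)) \<noteq> w n"
    using nonbacktracking_walk_exists[where P = "\<lambda>j k. adj j k \<and> \<not> returning j k" and u = j and v = k]
      non_returning_link_propagates by blast
  have edge: "adj (w n) (w (Suc n))" for n
    using walk(1) by blast
  have "graph_has_cycle N adj"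
  proof (rule nonbacktracking_walk_has_cycle[of adj w])
    show "adj (w n) (w (Suc n))" "w (Suc (Suc n)) \<noteq> w n" for n
      by (fact edge walk(2))+
    show "w (Suc n) \<noteq> w n" "w n < N" for n
      using adj_bounds[OF edge[of n]] by auto
  qed
  with acyclic show False ..
qed

lemma reaches_connected_circle:
  assumes returning: "\<And>j k. adj j k \<Longrightarrow> returning j k" and "adj\<^sup>*\<^sup>* i0 j"
  shows "\<exists>q. reached j q"
  using \<open>adj\<^sup>*\<^sup>* i0 j\<close>
proof (induction rule: rtranclp_induct)
  case (step j k)
  then obtain q where "reached j q"
    by blast
  then interpret circle_sweep N c r g i0 p0 j q
    by unfold_locales
  have "crosses j k"
    using crosses_link[OF step(2)] returning by blast
  then show ?case
    unfolding crosses_def by blast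
qed (use ring_state.start in blast)

lemma ring_eq_circles_if_tree:
  assumes "graph_tree N adj"
  shows "ring = (\<Union>k<N. sphere (c k) 1)"
proof
  have returning: "returning j k" if "adj j k" for j k
    using returning_if_acyclic assms that by (simp add: graph_tree_def)
  show "(\<Union>k<N. sphere (c k) 1) \<subseteq> ring"
  proof (rule UN_least)
    fix j assume "j \<in> {..<N}"
    then have "adj\<^sup>*\<^sup>* i0 j"
      using assms start_circle by (simp add: graph_tree_def graph_connected_def)
    then obtain q where "reached j q"
      using reaches_connected_circle returning by blast
    then interpret circle_sweep N c r g i0 p0 j q
      by unfold_locales
    show "sphere (c j) 1 \<subseteq> ring"
      using sweep_covers_circle returning by blast
  qed
qed (rule ring_subset_circles)

end

theorem lemma12:
  fixes N :: nat and c :: "nat \<Rightarrow> complex" and r :: real and g :: "nat \<Rightarrow> real"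
  assumes r_pos: "0 < r"
    and disjoint: "\<And>i j. i < N \<Longrightarrow> j < N \<Longrightarrow> i \<noteq> j \<Longrightarrow> 2 < cmod (c i - c j)"
    and distinct_links: "\<And>i j k. comm_adj N c r i j \<Longrightarrow> comm_adj N c r i k \<Longrightarrow>
                           link_pos c i j = link_pos c i k \<Longrightarrow> j = k"
    and dir: "direction_assignment N c r g"
    and tree: "graph_tree N (comm_adj N c r)"
  shows "\<forall>i<N. \<forall>p. cmod (p - c i) = 1 \<longrightarrow>
           ring_trace N c r g i p = (\<Union>k<N. sphere (c k) 1)"
proof (intro allI impI)
  fix i p assume "i < N" "cmod (p - c i) = 1"
  then interpret ring_system N c r g i p
    using disjoint dir by unfold_locales (force simp: direction_assignment_def)+
  show "ring_trace N c r g i p = (\<Union>k<N. sphere (c k) 1)"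
    using tree by (rule ring_eq_circles_if_tree)
qed

end
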